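(* For every $J$-unitary $T$ on ${\cal K}$, $$g(V(T))=g(T),\qquad g_{\mathrm{ess}}(V(T))=g_{\mathrm{ess}}(T),$$ and $$g(T)=g(T^* )=g(T^{-1}),\qquad g_{\mathrm{ess}}(T)=g_{\mathrm{ess}}(T^* )=g_{\mathrm{ess}}(T^{-1}).$$
   Context: ${\cal H}$ is a separable complex Hilbert space, ${\cal K}={\cal H}\oplus{\cal H}$, $J=\begin{pmatrix}{\bf 1}&0\\0&-{\bf 1}\end{pmatrix}$. A bounded invertible $T=\begin{pmatrix}a&b\\c&d\end{pmatrix}$ is $J$-unitary if $T^*JT=J$; $V(T)=\begin{pmatrix}(a^* )^{-1}&bd^{-1}\\-d^{-1}c&d^{-1}\end{pmatrix}$ (a unitary). For a bounded operator $A$ on a Hilbert space set $$g(A)=\min\sigma\Bigl(({\bf 1}+A^*A)^{-\frac12}({\bf 1}-A)^*({\bf 1}-A)({\bf 1}+A^*A)^{-\frac12}\Bigr)=\sup\{g\ge0:\ g({\bf 1}+A^*A)<(A-{\bf 1})^*(A-{\bf 1})\},$$ and let $g_{\mathrm{ess}}(A)$ be defined by the same supremum except that the operator inequality is only required to hold on some subspace of finite codimension. *)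

theory Defs
  imports "HOL-Analysis.Analysis"
begin

text \<open>A complex Hilbert space is modelled abstractly: a type 'h carrying an abelian
group structure, together with an explicit complex scalar multiplication sc and an
inner product ip (conjugate-linear in the first, linear in the second argument).\<close>

definition hnorm :: "('h \<Rightarrow> 'h \<Rightarrow> complex) \<Rightarrow> 'h \<Rightarrow> real" where
  "hnorm ip x = sqrt (Re (ip x x))"

definition separable_complex_hilbert ::
  "(complex \<Rightarrow> 'h::ab_group_add \<Rightarrow> 'h) \<Rightarrow> ('h \<Rightarrow> 'h \<Rightarrow> complex) \<Rightarrow> bool" where
  "separable_complex_hilbert sc ip \<longleftrightarrow>
     (\<forall>x. sc 1 x = x) \<and>
     (\<forall>a b x. sc a (sc b x) = sc (a * b) x) \<and>
     (\<forall>a b x. sc (a + b) x = sc a x + sc b x) \<and>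
     (\<forall>a x y. sc a (x + y) = sc a x + sc a y) \<and>
     (\<forall>x y z. ip x (y + z) = ip x y + ip x z) \<and>
     (\<forall>a x y. ip x (sc a y) = a * ip x y) \<and>
     (\<forall>x y. ip x y = cnj (ip y x)) \<and>
     (\<forall>x. Re (ip x x) \<ge> 0) \<and>
     (\<forall>x. ip x x = 0 \<longrightarrow> x = 0) \<and>
     \<comment> \<open>completeness\<close>
     (\<forall>s :: nat \<Rightarrow> 'h. (\<forall>e>0. \<exists>N. \<forall>m\<ge>N. \<forall>n\<ge>N. hnorm ip (s m - s n) < e) \<longrightarrow>
        (\<exists>l. \<forall>e>0. \<exists>N. \<forall>n\<ge>N. hnorm ip (s n - l) < e)) \<and>
     \<comment> \<open>separability\<close>
     (\<exists>D. countable D \<and> (\<forall>x. \<forall>e>0. \<exists>d\<in>D. hnorm ip (x - d) < e))"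

definition bounded_op ::
  "(complex \<Rightarrow> 'h::ab_group_add \<Rightarrow> 'h) \<Rightarrow> ('h \<Rightarrow> 'h \<Rightarrow> complex) \<Rightarrow> ('h \<Rightarrow> 'h) \<Rightarrow> bool" where
  "bounded_op sc ip A \<longleftrightarrow>
     (\<forall>x y. A (x + y) = A x + A y) \<and> (\<forall>a x. A (sc a x) = sc a (A x)) \<and>
     (\<exists>C. \<forall>x. hnorm ip (A x) \<le> C * hnorm ip x)"

text \<open>Hilbert space adjoint (unique for bounded operators).\<close>
definition adj :: "('h \<Rightarrow> 'h \<Rightarrow> complex) \<Rightarrow> ('h \<Rightarrow> 'h) \<Rightarrow> ('h \<Rightarrow> 'h)" where
  "adj ip A = (SOME B. \<forall>x y. ip (A x) y = ip x (B y))"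

definition scK :: "(complex \<Rightarrow> 'h \<Rightarrow> 'h) \<Rightarrow> complex \<Rightarrow> 'h \<times> 'h \<Rightarrow> 'h \<times> 'h" where
  "scK sc a z = (sc a (fst z), sc a (snd z))"

definition ipK :: "('h \<Rightarrow> 'h \<Rightarrow> complex) \<Rightarrow> 'h \<times> 'h \<Rightarrow> 'h \<times> 'h \<Rightarrow> complex" where
  "ipK ip z w = ip (fst z) (fst w) + ip (snd z) (snd w)"

definition Jop :: "'h::ab_group_add \<times> 'h \<Rightarrow> 'h \<times> 'h" where
  "Jop z = (fst z, - snd z)"

text \<open>Block entries of an operator T on K: T = [[a, b], [c, d]].\<close>
definition blk_a :: "('h::ab_group_add \<times> 'h \<Rightarrow> 'h \<times> 'h) \<Rightarrow> 'h \<Rightarrow> 'h" where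
  "blk_a T x = fst (T (x, 0))"
definition blk_b :: "('h::ab_group_add \<times> 'h \<Rightarrow> 'h \<times> 'h) \<Rightarrow> 'h \<Rightarrow> 'h" where
  "blk_b T y = fst (T (0, y))"
definition blk_c :: "('h::ab_group_add \<times> 'h \<Rightarrow> 'h \<times> 'h) \<Rightarrow> 'h \<Rightarrow> 'h" where
  "blk_c T x = snd (T (x, 0))"
definition blk_d :: "('h::ab_group_add \<times> 'h \<Rightarrow> 'h \<times> 'h) \<Rightarrow> 'h \<Rightarrow> 'h" where
  "blk_d T y = snd (T (0, y))"

definition J_unitary :: "(complex \<Rightarrow> 'h::ab_group_add \<Rightarrow> 'h) \<Rightarrow> ('h \<Rightarrow> 'h \<Rightarrow> complex)
    \<Rightarrow> ('h \<times> 'h \<Rightarrow> 'h \<times> 'h) \<Rightarrow> bool" where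
  "J_unitary sc ip T \<longleftrightarrow>
     bounded_op (scK sc) (ipK ip) T \<and> bij T \<and> bounded_op (scK sc) (ipK ip) (inv T) \<and>
     (\<forall>z. adj (ipK ip) T (Jop (T z)) = Jop z)"

text \<open>V(T) = [[(a*)^{-1}, b d^{-1}], [-d^{-1} c, d^{-1}]].\<close>
definition Vop :: "('h \<Rightarrow> 'h \<Rightarrow> complex) \<Rightarrow> ('h::ab_group_add \<times> 'h \<Rightarrow> 'h \<times> 'h) \<Rightarrow> 'h \<times> 'h \<Rightarrow> 'h \<times> 'h" where
  "Vop ip T z =
     (inv (adj ip (blk_a T)) (fst z) + blk_b T (inv (blk_d T) (snd z)),
      - inv (blk_d T) (blk_c T (fst z)) + inv (blk_d T) (snd z))"

text \<open>g(A) = sup {g \<ge> 0. g (1 + A*A) \<le> (A - 1)*(A - 1)}, the operator inequality written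
via quadratic forms: g (|x|^2 + |Ax|^2) \<le> |Ax - x|^2.\<close>
definition gval :: "('k::ab_group_add \<Rightarrow> 'k \<Rightarrow> complex) \<Rightarrow> ('k \<Rightarrow> 'k) \<Rightarrow> real" where
  "gval ip A = Sup {g. g \<ge> 0 \<and>
     (\<forall>x. g * ((hnorm ip x)\<^sup>2 + (hnorm ip (A x))\<^sup>2) \<le> (hnorm ip (A x - x))\<^sup>2)}"

definition fin_codim_subspace ::
  "(complex \<Rightarrow> 'k::ab_group_add \<Rightarrow> 'k) \<Rightarrow> ('k \<Rightarrow> 'k \<Rightarrow> complex) \<Rightarrow> 'k set \<Rightarrow> bool" where
  "fin_codim_subspace sc ip M \<longleftrightarrow>
     0 \<in> M \<and> (\<forall>x\<in>M. \<forall>y\<in>M. x + y \<in> M) \<and> (\<forall>a. \<forall>x\<in>M. sc a x \<in> M) \<and>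
     (\<forall>(s :: nat \<Rightarrow> 'k) l. (\<forall>n. s n \<in> M) \<and> (\<forall>e>0. \<exists>N. \<forall>n\<ge>N. hnorm ip (s n - l) < e) \<longrightarrow> l \<in> M) \<and>
     (\<exists>F. finite F \<and> (\<forall>x. \<exists>m\<in>M. \<exists>c. x = m + (\<Sum>f\<in>F. sc (c f) f)))"

definition gess :: "(complex \<Rightarrow> 'k::ab_group_add \<Rightarrow> 'k) \<Rightarrow> ('k \<Rightarrow> 'k \<Rightarrow> complex)
    \<Rightarrow> ('k \<Rightarrow> 'k) \<Rightarrow> real" where
  "gess sc ip A = Sup {g. g \<ge> 0 \<and> (\<exists>M. fin_codim_subspace sc ip M \<and>
     (\<forall>x\<in>M. g * ((hnorm ip x)\<^sup>2 + (hnorm ip (A x))\<^sup>2) \<le> (hnorm ip (A x - x))\<^sup>2))}"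

end

theory Submission
  imports Defs
begin

text \<open>Both g and g_ess are suprema of the numbers g for which the quadratic-form inequality
  g (|x|^2 + |A x|^2) \<le> |A x - x|^2 holds, on the whole space or on a closed subspace of
  finite codimension. Hence g(A) = g(B) and g_ess(A) = g_ess(B) as soon as a linear homeomorphism
  P satisfies |P z|^2 + |A P z|^2 = |z|^2 + |B z|^2 and |A P z - P z| = |B z - z|.
  For T\<inverse> take P = T; for T* = J T\<inverse> J take P = J and compare with T\<inverse>; for V(T) take the
  Potapov-Ginzburg map P (x1, x2) = (x1, (T x)2), for which V(T) (P x) = ((T x)1, x2).
  The analytic input is that d and a* are invertible: J-unitarity gives |d y|^2 = |y|^2 + |b y|^2,
  so d is bounded below and has closed range, and a vector q orthogonal to that range vanishes
  by the same identity applied to T\<inverse> (0, q); finally (a*)\<inverse> = a - b d\<inverse> c is read off from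
  T (x, - d\<inverse> c x) = (a x - b d\<inverse> c x, 0).\<close>

section \<open>Complex Hilbert spaces\<close>

definition converges :: "('h::ab_group_add \<Rightarrow> 'h \<Rightarrow> complex) \<Rightarrow> (nat \<Rightarrow> 'h) \<Rightarrow> 'h \<Rightarrow> bool" where
  "converges ip s l \<longleftrightarrow> (\<forall>e>0. \<exists>N. \<forall>n\<ge>N. hnorm ip (s n - l) < e)"

definition Cauchy_seq :: "('h::ab_group_add \<Rightarrow> 'h \<Rightarrow> complex) \<Rightarrow> (nat \<Rightarrow> 'h) \<Rightarrow> bool" where
  "Cauchy_seq ip s \<longleftrightarrow> (\<forall>e>0. \<exists>N. \<forall>m\<ge>N. \<forall>n\<ge>N. hnorm ip (s m - s n) < e)"

lemma Cauchy_seq_dominated: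
  assumes "Cauchy_seq ip s" "\<And>m n. hnorm ip' (t m - t n) \<le> hnorm ip (s m - s n)"
  shows "Cauchy_seq ip' t"
  using assms unfolding Cauchy_seq_def by (meson order_le_less_trans)

locale hilbert_space = module sc
  for sc :: "complex \<Rightarrow> 'h::ab_group_add \<Rightarrow> 'h" +
  fixes ip :: "'h \<Rightarrow> 'h \<Rightarrow> complex"
  assumes ip_add_right: "ip x (y + z) = ip x y + ip x z"
    and ip_sc_right: "ip x (sc a y) = a * ip x y"
    and ip_cnj: "ip x y = cnj (ip y x)"
    and ip_self_Re_nonneg: "Re (ip x x) \<ge> 0"
    and ip_self_eq_0: "ip x x = 0 \<Longrightarrow> x = 0"
    and complete: "Cauchy_seq ip s \<Longrightarrow> \<exists>l. converges ip s l"

lemma hilbert_space_if_separable_complex_hilbert: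
  assumes "separable_complex_hilbert sc ip"
  shows "hilbert_space sc ip"
proof unfold_locales
  have "\<forall>s. Cauchy_seq ip s \<longrightarrow> (\<exists>l. converges ip s l)"
    using assms unfolding separable_complex_hilbert_def Cauchy_seq_def converges_def by (elim conjE)
  then show "Cauchy_seq ip s \<Longrightarrow> \<exists>l. converges ip s l" for s by blast
qed (use assms in \<open>unfold separable_complex_hilbert_def; meson\<close>)+

context hilbert_space
begin

lemma ip_zero_right [simp]: "ip x 0 = 0"
  using ip_add_right[of x 0 0] by simp

lemma ip_minus_right [simp]: "ip x (- y) = - ip x y"
  using ip_add_right[of x "- y" y] by (simp add: eq_neg_iff_add_eq_0)

lemma ip_diff_right: "ip x (y - z) = ip x y - ip x z"
  using ip_add_right[of x y "- z"] by simp

lemma cnj_ip: "cnj (ip y x) = ip x y"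
  by (simp add: ip_cnj[of x y])

lemma ip_add_left: "ip (x + y) z = ip x z + ip y z"
  by (subst ip_cnj) (simp add: ip_add_right cnj_ip)

lemma ip_zero_left [simp]: "ip 0 x = 0"
  by (subst ip_cnj) simp

lemma ip_minus_left [simp]: "ip (- x) y = - ip x y"
  by (subst ip_cnj) (simp add: cnj_ip)

lemma ip_diff_left: "ip (x - y) z = ip x z - ip y z"
  by (subst ip_cnj) (simp add: ip_diff_right cnj_ip)

lemma ip_sc_left: "ip (sc a x) y = cnj a * ip x y"
  by (subst ip_cnj) (simp add: ip_sc_right cnj_ip)

lemma ip_right_cancel: "(\<And>x. ip x u = ip x v) \<Longrightarrow> u = v"
  using ip_self_eq_0[of "u - v"] by (simp add: ip_diff_right)

lemma ip_self_real: "ip x x = complex_of_real (Re (ip x x))"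
  using ip_cnj[of x x] by (simp add: complex_eq_iff)

lemma norm_sq: "(hnorm ip x)\<^sup>2 = Re (ip x x)"
  by (simp add: hnorm_def ip_self_Re_nonneg)

lemma norm_nonneg [simp]: "hnorm ip x \<ge> 0"
  by (simp add: hnorm_def ip_self_Re_nonneg)

lemma norm_eq_0_iff [simp]: "hnorm ip x = 0 \<longleftrightarrow> x = 0"
proof
  assume "hnorm ip x = 0"
  then have "ip x x = 0"
    using norm_sq[of x] ip_self_real[of x] by simp
  then show "x = 0" by (rule ip_self_eq_0)
qed (simp add: hnorm_def)

lemma norm_zero [simp]: "hnorm ip 0 = 0"
  by simp

lemma norm_pos_iff: "hnorm ip x > 0 \<longleftrightarrow> x \<noteq> 0"
  using norm_nonneg[of x] norm_eq_0_iff[of x] by linarith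

lemma cnj_mult_self: "cnj z * z = complex_of_real ((cmod z)\<^sup>2)"
  by (metis complex_norm_square mult.commute)

lemma norm_sc: "hnorm ip (sc a x) = cmod a * hnorm ip x"
proof -
  have "ip (sc a x) (sc a x) = (cnj a * a) * ip x x"
    by (simp add: ip_sc_left ip_sc_right)
  then have "ip (sc a x) (sc a x) = complex_of_real ((cmod a)\<^sup>2) * ip x x"
    by (simp only: cnj_mult_self)
  then have "(hnorm ip (sc a x))\<^sup>2 = (cmod a * hnorm ip x)\<^sup>2"
    by (simp add: norm_sq power_mult_distrib)
  then show ?thesis by (simp add: power2_eq_iff_nonneg)
qed

lemma norm_minus: "hnorm ip (- x) = hnorm ip x"
  using norm_sc[of "- 1" x] by simp

lemma norm_minus_commute: "hnorm ip (x - y) = hnorm ip (y - x)"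
  using norm_minus[of "x - y"] by simp

lemma norm_sq_add: "(hnorm ip (x + y))\<^sup>2 = (hnorm ip x)\<^sup>2 + (hnorm ip y)\<^sup>2 + 2 * Re (ip x y)"
proof -
  have "Re (ip y x) = Re (ip x y)" by (subst ip_cnj) simp
  then show ?thesis by (simp add: norm_sq ip_add_left ip_add_right)
qed

lemma norm_sq_diff: "(hnorm ip (x - y))\<^sup>2 = (hnorm ip x)\<^sup>2 + (hnorm ip y)\<^sup>2 - 2 * Re (ip x y)"
  using norm_sq_add[of x "- y"] by (simp add: norm_minus)

lemma parallelogram:
  "(hnorm ip (x + y))\<^sup>2 + (hnorm ip (x - y))\<^sup>2 = 2 * (hnorm ip x)\<^sup>2 + 2 * (hnorm ip y)\<^sup>2"
  by (simp add: norm_sq_add norm_sq_diff)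

lemma norm_sq_diff_sc:
  "(hnorm ip (x - sc t y))\<^sup>2 = (hnorm ip x)\<^sup>2 + (cmod t)\<^sup>2 * (hnorm ip y)\<^sup>2 - 2 * Re (t * ip x y)"
proof -
  have "ip (x - sc t y) (x - sc t y) = ip x x - t * ip x y - cnj t * ip y x + (cnj t * t) * ip y y"
    by (simp add: ip_diff_left ip_diff_right ip_sc_left ip_sc_right mult.assoc)
      (simp add: ring_distribs mult.left_commute)
  moreover have "cnj t * ip y x = cnj (t * ip x y)" by (simp add: cnj_ip)
  ultimately show ?thesis by (simp add: norm_sq cnj_mult_self)
qed

text \<open>The coefficient is the one that makes the remainder orthogonal to y.\<close>
lemma norm_sq_diff_component:
  assumes "y \<noteq> 0"
  shows "(hnorm ip (x - sc (cnj (ip x y) / complex_of_real ((hnorm ip y)\<^sup>2)) y))\<^sup>2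
           = (hnorm ip x)\<^sup>2 - (cmod (ip x y))\<^sup>2 / (hnorm ip y)\<^sup>2"
proof -
  define n where "n = (hnorm ip y)\<^sup>2"
  define t where "t = cnj (ip x y) / complex_of_real n"
  have n: "n > 0" using assms by (simp add: n_def norm_pos_iff)
  have "cmod t = cmod (ip x y) / n"
    unfolding t_def norm_divide complex_mod_cnj norm_of_real using n by simp
  moreover have "t * ip x y = complex_of_real ((cmod (ip x y))\<^sup>2 / n)"
    by (simp add: t_def cnj_mult_self)
  ultimately have "(hnorm ip (x - sc t y))\<^sup>2
      = (hnorm ip x)\<^sup>2 + (cmod (ip x y) / n)\<^sup>2 * n - 2 * ((cmod (ip x y))\<^sup>2 / n)"
    by (simp add: norm_sq_diff_sc n_def)
  also have "\<dots> = (hnorm ip x)\<^sup>2 - (cmod (ip x y))\<^sup>2 / n"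
    using n by (simp add: power2_eq_square field_simps)
  finally show ?thesis by (simp add: t_def n_def)
qed

lemma Cauchy_Schwarz: "cmod (ip x y) \<le> hnorm ip x * hnorm ip y"
proof (cases "y = 0")
  case False
  have y: "(hnorm ip y)\<^sup>2 > 0" using False by (simp add: norm_pos_iff)
  have "0 \<le> (hnorm ip x)\<^sup>2 - (cmod (ip x y))\<^sup>2 / (hnorm ip y)\<^sup>2"
    unfolding norm_sq_diff_component[OF False, symmetric] by (rule zero_le_power2)
  then have "(cmod (ip x y))\<^sup>2 \<le> (hnorm ip x)\<^sup>2 * (hnorm ip y)\<^sup>2"
    using pos_divide_le_eq[OF y, of "(cmod (ip x y))\<^sup>2" "(hnorm ip x)\<^sup>2"] by linarith
  then have "(cmod (ip x y))\<^sup>2 \<le> (hnorm ip x * hnorm ip y)\<^sup>2"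
    by (simp only: power_mult_distrib)
  then show ?thesis by (rule power2_le_imp_le) simp
qed simp

lemma norm_triangle: "hnorm ip (x + y) \<le> hnorm ip x + hnorm ip y"
proof -
  have "Re (ip x y) \<le> hnorm ip x * hnorm ip y"
    using Cauchy_Schwarz[of x y] complex_Re_le_cmod[of "ip x y"] by linarith
  then have "(hnorm ip (x + y))\<^sup>2 \<le> (hnorm ip x + hnorm ip y)\<^sup>2"
    by (simp add: norm_sq_add power2_sum)
  then show ?thesis by (rule power2_le_imp_le) simp
qed

lemma norm_triangle_diff: "hnorm ip (x - z) \<le> hnorm ip (x - y) + hnorm ip (y - z)"
  using norm_triangle[of "x - y" "y - z"] by simp

lemma eq_if_norm_diff_less:
  assumes "\<And>e. e > 0 \<Longrightarrow> hnorm ip (x - y) < e"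
  shows "x = y"
  using norm_pos_iff[of "x - y"] assms[of "hnorm ip (x - y)"] by auto

lemma bound_with_positive_constant:
  assumes "\<And>x. r x \<le> C * hnorm ip x"
  obtains C' where "C' > 0" "\<And>x. r x \<le> C' * hnorm ip x"
proof
  show "max C 1 > 0" by simp
  show "r x \<le> max C 1 * hnorm ip x" for x
    using assms[of x] mult_right_mono[of C "max C 1" "hnorm ip x"] by simp
qed

definition closed_subspace :: "'h set \<Rightarrow> bool" where
  "closed_subspace M \<longleftrightarrow> subspace M \<and> (\<forall>s l. (\<forall>n. s n \<in> M) \<longrightarrow> converges ip s l \<longrightarrow> l \<in> M)"

lemma closed_subspaceI:
  assumes "subspace M" "\<And>s l. (\<And>n. s n \<in> M) \<Longrightarrow> converges ip s l \<Longrightarrow> l \<in> M"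
  shows "closed_subspace M"
  using assms unfolding closed_subspace_def by blast

lemma closed_subspaceD:
  assumes "closed_subspace M"
  shows "subspace M" "(\<And>n. s n \<in> M) \<Longrightarrow> converges ip s l \<Longrightarrow> l \<in> M"
  using assms unfolding closed_subspace_def by blast+

lemma fin_codim_subspace_iff:
  "fin_codim_subspace sc ip M \<longleftrightarrow> closed_subspace M \<and>
     (\<exists>F. finite F \<and> (\<forall>x. \<exists>m\<in>M. \<exists>c. x = m + (\<Sum>f\<in>F. sc (c f) f)))"
  unfolding fin_codim_subspace_def closed_subspace_def subspace_def converges_def by blast

lemma converges_imp_Cauchy_seq:
  assumes "converges ip s l"
  shows "Cauchy_seq ip s"
  unfolding Cauchy_seq_def
proof (intro allI impI)
  fix e :: real assume "e > 0"
  then obtain N where N: "\<forall>n\<ge>N. hnorm ip (s n - l) < e / 2"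
    using assms unfolding converges_def by (meson half_gt_zero)
  have "hnorm ip (s m - s n) < e" if "m \<ge> N" "n \<ge> N" for m n
  proof -
    have "hnorm ip (s m - l) < e / 2" "hnorm ip (l - s n) < e / 2"
      using N that by (auto simp: norm_minus_commute[of l])
    then show ?thesis
      using norm_triangle_diff[where x = "s m" and y = l and z = "s n"] by linarith
  qed
  then show "\<exists>N. \<forall>m\<ge>N. \<forall>n\<ge>N. hnorm ip (s m - s n) < e" by blast
qed

lemma converges_unique:
  assumes "converges ip s l" "converges ip s l'"
  shows "l = l'"
proof (rule eq_if_norm_diff_less)
  fix e :: real assume "e > 0"
  then obtain N N' where "\<forall>n\<ge>N. hnorm ip (s n - l) < e / 2" "\<forall>n\<ge>N'. hnorm ip (s n - l') < e / 2"
    using assms unfolding converges_def by (meson half_gt_zero)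
  then have "hnorm ip (l - s (max N N')) < e / 2" "hnorm ip (s (max N N') - l') < e / 2"
    by (simp_all add: norm_minus_commute)
  then show "hnorm ip (l - l') < e"
    using norm_triangle_diff[where x = l and y = "s (max N N')" and z = l'] by linarith
qed

lemma converges_image:
  assumes Q: "module_hom sc sc Q" "\<And>x. hnorm ip (Q x) \<le> C * hnorm ip x"
    and l: "converges ip s l"
  shows "converges ip (\<lambda>n. Q (s n)) (Q l)"
  unfolding converges_def
proof (intro allI impI)
  obtain C' where C': "C' > 0" "\<And>x. hnorm ip (Q x) \<le> C' * hnorm ip x"
    using bound_with_positive_constant[of "\<lambda>x. hnorm ip (Q x)"] Q(2) by blast
  fix e :: real assume "e > 0"
  then obtain N where N: "\<forall>n\<ge>N. hnorm ip (s n - l) < e / C'"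
    using l C'(1) unfolding converges_def by (meson divide_pos_pos)
  have "hnorm ip (Q (s n) - Q l) < e" if "n \<ge> N" for n
  proof -
    have "hnorm ip (Q (s n) - Q l) \<le> C' * hnorm ip (s n - l)"
      using C'(2)[of "s n - l"] by (simp add: module_hom.diff[OF Q(1)])
    also have "\<dots> < C' * (e / C')"
      using N that C'(1) by (intro mult_strict_left_mono) auto
    finally show ?thesis using C'(1) by simp
  qed
  then show "\<exists>N. \<forall>n\<ge>N. hnorm ip (Q (s n) - Q l) < e" by blast
qed

section \<open>Projections, Riesz representation and adjoints\<close>

lemma real_divide_Suc_eventually_less:
  fixes c e :: real
  assumes "e > 0"
  shows "\<exists>N. \<forall>n\<ge>N. c / (real n + 1) < e"
proof -
  obtain N :: nat where N: "real N > c / e" using reals_Archimedean2 by blast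
  have "c / (real n + 1) < e" if "n \<ge> N" for n
  proof -
    have "c / e < real n + 1" using N that by linarith
    then show ?thesis using assms by (simp add: pos_divide_less_eq mult.commute)
  qed
  then show ?thesis by blast
qed


text \<open>The parallelogram law applied to x - s j and x - s k, whose half-sum x - (s j + s k)/2
  is at distance at least d from x.\<close>
lemma minimizing_sequence_Cauchy:
  assumes M: "subspace M" and sM: "\<And>n. s n \<in> M"
    and d: "\<And>u. u \<in> M \<Longrightarrow> d \<le> hnorm ip (x - u)" "d \<ge> 0"
    and s: "\<And>n. (hnorm ip (x - s n))\<^sup>2 < d\<^sup>2 + 1 / (real n + 1)"
  shows "Cauchy_seq ip s"
proof -
  have bound: "(hnorm ip (s j - s k))\<^sup>2 \<le> 2 / (real j + 1) + 2 / (real k + 1)" for j k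
  proof -
    have "sc (1 / 2) (s j + s k) \<in> M"
      using M sM by (simp add: subspace_add subspace_scale)
    then have "2 * d \<le> 2 * hnorm ip (x - sc (1 / 2) (s j + s k))"
      using d(1) by simp
    also have "\<dots> = hnorm ip (sc 2 (x - sc (1 / 2) (s j + s k)))"
      by (simp add: norm_sc)
    also have "sc 2 (x - sc (1 / 2) (s j + s k)) = (x - s j) + (x - s k)"
      by (simp add: scale_right_diff_distrib scale_left_distrib[of 1 1, simplified])
    finally have "(2 * d)\<^sup>2 \<le> (hnorm ip ((x - s j) + (x - s k)))\<^sup>2"
      using d(2) by (intro power_mono) simp_all
    moreover have "(x - s j) - (x - s k) = s k - s j" by simp
    ultimately show ?thesis
      using parallelogram[of "x - s j" "x - s k"] s[of j] s[of k] norm_minus_commute[of "s k"]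
      by (simp add: power_mult_distrib)
  qed
  show ?thesis unfolding Cauchy_seq_def
  proof (intro allI impI)
    fix e :: real assume e: "e > 0"
    obtain N where N: "\<And>n. n \<ge> N \<Longrightarrow> 2 / (real n + 1) < e\<^sup>2 / 2"
      using real_divide_Suc_eventually_less[of "e\<^sup>2 / 2" 2] e by auto
    have "hnorm ip (s m - s n) < e" if "m \<ge> N" "n \<ge> N" for m n
    proof -
      have "(hnorm ip (s m - s n))\<^sup>2 < e\<^sup>2"
        using bound[of m n] N[OF that(1)] N[OF that(2)] by linarith
      then show ?thesis using e by (rule power2_less_imp_less[OF _ less_imp_le])
    qed
    then show "\<exists>N. \<forall>m\<ge>N. \<forall>n\<ge>N. hnorm ip (s m - s n) < e" by blast
  qed
qed

lemma norm_diff_limit_le: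
  assumes l: "converges ip s l" and "d \<ge> 0"
    and s: "\<And>n. (hnorm ip (x - s n))\<^sup>2 < d\<^sup>2 + 1 / (real n + 1)"
  shows "hnorm ip (x - l) \<le> d"
proof (rule field_le_epsilon)
  fix e :: real assume e: "e > 0"
  obtain N1 where N1: "\<And>n. n \<ge> N1 \<Longrightarrow> 1 / (real n + 1) < (e / 2)\<^sup>2"
    using real_divide_Suc_eventually_less[of "(e / 2)\<^sup>2" 1] e by auto
  obtain N2 where N2: "\<And>n. n \<ge> N2 \<Longrightarrow> hnorm ip (s n - l) < e / 2"
    using l e unfolding converges_def by (meson half_gt_zero)
  define n where "n = max N1 N2"
  have "1 / (real n + 1) < (e / 2)\<^sup>2" "0 \<le> 2 * d * (e / 2)"
    using N1 \<open>d \<ge> 0\<close> e by (simp_all add: n_def)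
  then have "(hnorm ip (x - s n))\<^sup>2 < (d + e / 2)\<^sup>2"
    using s[of n] unfolding power2_sum by linarith
  then have "hnorm ip (x - s n) < d + e / 2"
    by (rule power2_less_imp_less) (use \<open>d \<ge> 0\<close> e in simp)
  then show "hnorm ip (x - l) \<le> d + e"
    using norm_triangle_diff[where x = x and y = "s n" and z = l] N2[of n] by (simp add: n_def)
qed

lemma closest_point_exists:
  assumes M: "closed_subspace M"
  shows "\<exists>m\<in>M. \<forall>u\<in>M. hnorm ip (x - m) \<le> hnorm ip (x - u)"
proof -
  have M0: "0 \<in> M" using closed_subspaceD(1)[OF M] by (rule subspace_0)
  define d where "d = Inf ((\<lambda>u. hnorm ip (x - u)) ` M)"
  have "bdd_below ((\<lambda>u. hnorm ip (x - u)) ` M)"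
    by (rule bdd_belowI[of _ 0]) auto
  then have d_le: "d \<le> hnorm ip (x - u)" if "u \<in> M" for u
    unfolding d_def using that by (rule cINF_lower)
  have d0: "d \<ge> 0"
    unfolding d_def using M0 by (auto intro: cInf_greatest)
  have "\<exists>m\<in>M. (hnorm ip (x - m))\<^sup>2 < d\<^sup>2 + 1 / (real n + 1)" for n
  proof -
    have "d < sqrt (d\<^sup>2 + 1 / (real n + 1))"
      by (rule real_less_rsqrt) simp
    then obtain m where m: "m \<in> M" "hnorm ip (x - m) < sqrt (d\<^sup>2 + 1 / (real n + 1))"
      using cInf_lessD[of "(\<lambda>u. hnorm ip (x - u)) ` M"] M0 unfolding d_def by blast
    then have "(hnorm ip (x - m))\<^sup>2 < (sqrt (d\<^sup>2 + 1 / (real n + 1)))\<^sup>2"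
      by (intro power_strict_mono) simp_all
    then show ?thesis using m(1) by auto
  qed
  then obtain s where sM: "\<And>n. s n \<in> M"
    and s: "\<And>n. (hnorm ip (x - s n))\<^sup>2 < d\<^sup>2 + 1 / (real n + 1)"
    by metis
  obtain l where l: "converges ip s l"
    using complete minimizing_sequence_Cauchy[OF closed_subspaceD(1)[OF M] sM d_le d0 s] by blast
  then show ?thesis
    using closed_subspaceD(2)[OF M sM l] norm_diff_limit_le[OF l d0 s] d_le by (meson order_trans)
qed

text \<open>Otherwise moving from m along a multiple of u would decrease the distance.\<close>
lemma closest_point_orthogonal:
  assumes M: "closed_subspace M" and m: "m \<in> M" "\<forall>u\<in>M. hnorm ip (x - m) \<le> hnorm ip (x - u)"
    and u: "u \<in> M"
  shows "ip u (x - m) = 0"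
proof (cases "u = 0")
  case False
  define t where "t = cnj (ip (x - m) u) / complex_of_real ((hnorm ip u)\<^sup>2)"
  have "m + sc t u \<in> M"
    using closed_subspaceD(1)[OF M] m u by (simp add: subspace_add subspace_scale)
  then have "hnorm ip (x - m) \<le> hnorm ip ((x - m) - sc t u)"
    using m(2) by (simp add: diff_diff_eq)
  then have "(hnorm ip (x - m))\<^sup>2 \<le> (hnorm ip ((x - m) - sc t u))\<^sup>2"
    by (rule power_mono) simp
  also have "\<dots> = (hnorm ip (x - m))\<^sup>2 - (cmod (ip (x - m) u))\<^sup>2 / (hnorm ip u)\<^sup>2"
    unfolding t_def by (rule norm_sq_diff_component[OF False])
  finally have "(cmod (ip (x - m) u))\<^sup>2 / (hnorm ip u)\<^sup>2 \<le> 0" by simp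
  then have "ip (x - m) u = 0"
    using False norm_pos_iff[of u] by (simp add: divide_le_0_iff)
  then show ?thesis by (subst ip_cnj) simp
qed simp

lemma closed_subspace_eq_UNIV:
  assumes M: "closed_subspace M" and perp: "\<And>q. (\<And>u. u \<in> M \<Longrightarrow> ip u q = 0) \<Longrightarrow> q = 0"
  shows "M = UNIV"
proof -
  have "x \<in> M" for x
  proof -
    obtain m where m: "m \<in> M" "\<forall>u\<in>M. hnorm ip (x - m) \<le> hnorm ip (x - u)"
      using closest_point_exists[OF M] by blast
    then have "x - m = 0"
      using perp closest_point_orthogonal[OF M m] by blast
    then show ?thesis using m(1) by simp
  qed
  then show ?thesis by blast
qed

lemma closed_subspace_kernel:
  assumes f: "\<And>x y. f (x + y) = f x + f y" "\<And>a x. f (sc a x) = a * f x"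
    and bound: "\<And>x. cmod (f x) \<le> C * hnorm ip x"
  shows "closed_subspace {x. f x = 0}"
proof (rule closed_subspaceI)
  have f_diff: "f (x - y) = f x - f y" for x y
    using f(1)[of "x - y" y] by simp
  show "subspace {x. f x = 0}"
    unfolding subspace_def using f f_diff[of 0 0] by simp
  obtain C' where C': "C' > 0" "\<And>x. cmod (f x) \<le> C' * hnorm ip x"
    using bound_with_positive_constant[of "\<lambda>x. cmod (f x)"] bound by blast
  fix s l assume s: "\<And>n. s n \<in> {x. f x = 0}" and l: "converges ip s l"
  have "cmod (f l) < e" if e: "e > 0" for e
  proof -
    obtain n where n: "hnorm ip (s n - l) < e / C'"
      using l e C'(1) unfolding converges_def by (meson divide_pos_pos order_refl)
    have "cmod (f l) = cmod (f (s n - l))"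
      using s[of n] by (simp add: f_diff)
    also have "\<dots> \<le> C' * hnorm ip (s n - l)" by (rule C'(2))
    also have "\<dots> < C' * (e / C')" using n C'(1) by (intro mult_strict_left_mono)
    finally show ?thesis using C'(1) by simp
  qed
  then have "cmod (f l) = 0"
    by (metis less_irrefl norm_ge_zero order_le_less)
  then show "l \<in> {x. f x = 0}" by simp
qed

text \<open>The vector z below is orthogonal to the kernel N of f, and for every x the combination
  f z x - f x z lies in N.\<close>
lemma Riesz_representation:
  assumes f: "\<And>x y. f (x + y) = f x + f y" "\<And>a x. f (sc a x) = a * f x"
    and bound: "\<And>x. cmod (f x) \<le> C * hnorm ip x"
  shows "\<exists>r. \<forall>x. f x = ip r x"
proof (cases "\<forall>x. f x = 0")
  case True
  then show ?thesis by (metis ip_zero_left)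
next
  case False
  then obtain x0 where fx0: "f x0 \<noteq> 0" by blast
  have f_diff: "f (x - y) = f x - f y" for x y
    using f(1)[of "x - y" y] by simp
  define N where "N = {x. f x = 0}"
  have N: "closed_subspace N"
    unfolding N_def using f bound by (rule closed_subspace_kernel)
  obtain m where m: "m \<in> N" "\<forall>u\<in>N. hnorm ip (x0 - m) \<le> hnorm ip (x0 - u)"
    using closest_point_exists[OF N] by blast
  define z where "z = x0 - m"
  have z_perp: "ip u z = 0" if "u \<in> N" for u
    unfolding z_def by (rule closest_point_orthogonal[OF N m that])
  have "f z = f x0" using m(1) by (simp add: z_def N_def f_diff)
  then have "z \<noteq> 0" using fx0 f_diff[of 0 0] by auto
  then have zz: "ip z z \<noteq> 0" using ip_self_eq_0 by blast
  have "f x = ip (sc (cnj (f z / ip z z)) z) x" for x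
  proof -
    have "sc (f z) x - sc (f x) z \<in> N"
      by (simp add: N_def f_diff f(2))
    then have "ip z (sc (f z) x - sc (f x) z) = 0"
      using z_perp by (subst ip_cnj) simp
    then have "f z * ip z x = f x * ip z z"
      by (simp add: ip_diff_right ip_sc_right)
    then show ?thesis using zz by (simp add: ip_sc_left field_simps)
  qed
  then show ?thesis by blast
qed

lemma bounded_opE:
  assumes "bounded_op sc ip A"
  obtains C where "module_hom sc sc A" "C > 0" "\<And>x. hnorm ip (A x) \<le> C * hnorm ip x"
proof -
  obtain C where A: "module_hom sc sc A" "\<And>x. hnorm ip (A x) \<le> C * hnorm ip x"
    using assms by (auto simp: bounded_op_def module_hom_iff module_axioms)
  obtain C' where "C' > 0" "\<And>x. hnorm ip (A x) \<le> C' * hnorm ip x"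
    using bound_with_positive_constant[of "\<lambda>x. hnorm ip (A x)", OF A(2)] by blast
  then show ?thesis using that A(1) by blast
qed

lemma module_hom_inv: "module_hom sc sc P \<Longrightarrow> bij P \<Longrightarrow> module_hom sc sc (inv P)"
  by (rule module_pair.bij_module_hom_imp_inv_module_hom[of sc sc])
    (simp_all add: module_pair_def module_axioms)

lemma adjoint_exists:
  assumes "bounded_op sc ip A"
  shows "\<exists>B. \<forall>x y. ip (A x) y = ip x (B y)"
proof -
  obtain C where A: "module_hom sc sc A" "\<And>x. hnorm ip (A x) \<le> C * hnorm ip x"
    using assms by (rule bounded_opE) blast
  have "\<exists>r. \<forall>x. ip y (A x) = ip r x" for y
  proof (rule Riesz_representation)
    show "ip y (A (x + z)) = ip y (A x) + ip y (A z)" for x z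
      by (simp add: module_hom.add[OF A(1)] ip_add_right)
    show "ip y (A (sc a x)) = a * ip y (A x)" for a x
      by (simp add: module_hom.scale[OF A(1)] ip_sc_right)
    show "cmod (ip y (A x)) \<le> (hnorm ip y * C) * hnorm ip x" for x
      using Cauchy_Schwarz[of y "A x"] mult_left_mono[OF A(2)[of x] norm_nonneg[of y]]
      by (simp add: mult.assoc)
  qed
  then obtain B where "\<forall>y x. ip y (A x) = ip (B y) x" by metis
  then have "ip (A x) y = ip x (B y)" for x y
    by (subst ip_cnj) (simp add: cnj_ip)
  then show ?thesis by blast
qed

lemma adj_adjoint: "bounded_op sc ip A \<Longrightarrow> ip (A x) y = ip x (adj ip A y)"
  using someI_ex[OF adjoint_exists] unfolding adj_def by blast

lemma adj_eqI:
  assumes "\<And>x y. ip (A x) y = ip x (B y)"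
  shows "adj ip A = B"
proof
  have adj: "\<forall>x y. ip (A x) y = ip x (adj ip A y)"
    unfolding adj_def by (rule someI[of _ B]) (use assms in blast)
  fix y
  show "adj ip A y = B y"
    by (rule ip_right_cancel) (simp add: adj[rule_format, symmetric] assms)
qed

lemma closed_subspace_range:
  assumes L: "module_hom sc sc L" "\<And>x. hnorm ip (L x) \<le> C * hnorm ip x"
    and below: "\<And>x. hnorm ip x \<le> hnorm ip (L x)"
  shows "closed_subspace (range L)"
proof (rule closed_subspaceI)
  show "subspace (range L)"
    using module_hom.subspace_image[OF L(1) subspace_UNIV] .
  fix s l assume s: "\<And>n. s n \<in> range L" and l: "converges ip s l"
  define t where "t n = inv L (s n)" for n
  have t: "s = (\<lambda>n. L (t n))"
    using s by (auto simp: t_def f_inv_into_f)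
  have "hnorm ip (t m - t n) \<le> hnorm ip (s m - s n)" for m n
    using below[of "t m - t n"] by (simp add: t module_hom.diff[OF L(1)])
  then have "Cauchy_seq ip t"
    using converges_imp_Cauchy_seq[OF l] unfolding Cauchy_seq_def by (meson order_le_less_trans)
  then obtain x where "converges ip t x" using complete by blast
  then have "converges ip s (L x)" unfolding t by (rule converges_image[OF L])
  then show "l \<in> range L" using converges_unique[OF l] by blast
qed

lemma closed_subspace_image:
  assumes M: "closed_subspace M"
    and P: "module_hom sc sc P" "bij P" "\<And>x. hnorm ip (inv P x) \<le> C * hnorm ip x"
  shows "closed_subspace (P ` M)"
proof (rule closed_subspaceI)
  show "subspace (P ` M)"
    using module_hom.subspace_image[OF P(1) closed_subspaceD(1)[OF M]] .
  fix s l assume s: "\<And>n. s n \<in> P ` M" and l: "converges ip s l"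
  have "inv P (s n) \<in> M" for n
    using s[of n] P(2) by (auto simp: bij_is_inj)
  moreover have "converges ip (\<lambda>n. inv P (s n)) (inv P l)"
    using converges_image[OF module_hom_inv[OF P(1,2)] P(3) l] .
  ultimately have "inv P l \<in> M" by (rule closed_subspaceD(2)[OF M])
  moreover have "P (inv P l) = l"
    using P(2) by (simp add: bij_is_surj surj_f_inv_f)
  ultimately show "l \<in> P ` M" by (metis image_eqI)
qed

lemma fin_codim_subspace_image:
  assumes M: "fin_codim_subspace sc ip M"
    and P: "module_hom sc sc P" "bij P" "\<And>x. hnorm ip (inv P x) \<le> C * hnorm ip x"
  shows "fin_codim_subspace sc ip (P ` M)"
proof -
  have PQ: "P (inv P x) = x" and QP: "inv P (P x) = x" for x
    using P(2) by (simp_all add: bij_is_surj surj_f_inv_f bij_is_inj)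
  obtain F where F: "finite F" "\<forall>x. \<exists>m\<in>M. \<exists>c. x = m + (\<Sum>f\<in>F. sc (c f) f)"
    and Mc: "closed_subspace M"
    using M by (auto simp: fin_codim_subspace_iff)
  have "\<exists>m\<in>P ` M. \<exists>c. x = m + (\<Sum>g\<in>P ` F. sc (c g) g)" for x
  proof -
    obtain m c where m: "m \<in> M" "inv P x = m + (\<Sum>f\<in>F. sc (c f) f)"
      using F(2) by blast
    have "x = P m + (\<Sum>f\<in>F. sc (c f) (P f))"
      using arg_cong[OF m(2), of P] by (simp add: PQ module_hom.add[OF P(1)]
        module_hom.sum[OF P(1)] module_hom.scale[OF P(1)])
    also have "inj_on P F"
      using bij_is_inj[OF P(2)] by (rule inj_on_subset) simp
    then have "(\<Sum>f\<in>F. sc (c f) (P f)) = (\<Sum>g\<in>P ` F. sc (c (inv P g)) g)"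
      by (simp add: sum.reindex QP)
    finally show ?thesis
      using m(1) by (intro bexI[of _ "P m"] exI[of _ "\<lambda>g. c (inv P g)"]) simp_all
  qed
  then show ?thesis
    using F(1) closed_subspace_image[OF Mc P] by (auto simp: fin_codim_subspace_iff)
qed

end

section \<open>The functionals g and g_ess\<close>

definition g_admissible :: "('k::ab_group_add \<Rightarrow> 'k \<Rightarrow> complex) \<Rightarrow> ('k \<Rightarrow> 'k) \<Rightarrow> real \<Rightarrow> 'k set \<Rightarrow> bool" where
  "g_admissible ip A g S \<longleftrightarrow>
     (\<forall>x\<in>S. g * ((hnorm ip x)\<^sup>2 + (hnorm ip (A x))\<^sup>2) \<le> (hnorm ip (A x - x))\<^sup>2)"

lemma gval_eq_Sup_admissible: "gval ip A = Sup {g. g \<ge> 0 \<and> g_admissible ip A g UNIV}"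
  by (simp add: gval_def g_admissible_def)

lemma gess_eq_Sup_admissible:
  "gess sc ip A = Sup {g. g \<ge> 0 \<and> (\<exists>M. fin_codim_subspace sc ip M \<and> g_admissible ip A g M)}"
  by (simp add: gess_def g_admissible_def)

lemma g_admissible_image:
  assumes "\<And>z. (hnorm ip (P z))\<^sup>2 + (hnorm ip (A (P z)))\<^sup>2 = (hnorm ip z)\<^sup>2 + (hnorm ip (B z))\<^sup>2"
    and "\<And>z. hnorm ip (A (P z) - P z) = hnorm ip (B z - z)"
  shows "g_admissible ip A g (P ` S) \<longleftrightarrow> g_admissible ip B g S"
  unfolding g_admissible_def by (simp add: assms)

lemma gval_transfer:
  assumes "surj P"
    and "\<And>z. (hnorm ip (P z))\<^sup>2 + (hnorm ip (A (P z)))\<^sup>2 = (hnorm ip z)\<^sup>2 + (hnorm ip (B z))\<^sup>2"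
    and "\<And>z. hnorm ip (A (P z) - P z) = hnorm ip (B z - z)"
  shows "gval ip A = gval ip B"
  using g_admissible_image[OF assms(2,3), of _ UNIV] assms(1)
  by (simp add: gval_eq_Sup_admissible)

context hilbert_space
begin

lemma gess_transfer:
  assumes P: "module_hom sc sc P" "bij P"
    "\<And>x. hnorm ip (P x) \<le> C * hnorm ip x" "\<And>x. hnorm ip (inv P x) \<le> C' * hnorm ip x"
    and forms: "\<And>z. (hnorm ip (P z))\<^sup>2 + (hnorm ip (A (P z)))\<^sup>2 = (hnorm ip z)\<^sup>2 + (hnorm ip (B z))\<^sup>2"
      "\<And>z. hnorm ip (A (P z) - P z) = hnorm ip (B z - z)"
  shows "gess sc ip A = gess sc ip B"
proof -
  have inv_P: "module_hom sc sc (inv P)" "bij (inv P)" "inv (inv P) = P"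
    using module_hom_inv[OF P(1,2)] bij_imp_bij_inv[OF P(2)] inv_inv_eq[OF P(2)] by simp_all
  have "(\<exists>M. fin_codim_subspace sc ip M \<and> g_admissible ip A g M) \<longleftrightarrow>
        (\<exists>M. fin_codim_subspace sc ip M \<and> g_admissible ip B g M)" for g
  proof
    assume "\<exists>M. fin_codim_subspace sc ip M \<and> g_admissible ip A g M"
    then obtain M where M: "fin_codim_subspace sc ip M" "g_admissible ip A g M" by blast
    have "fin_codim_subspace sc ip (inv P ` M)"
      by (rule fin_codim_subspace_image[OF M(1) inv_P(1,2), where C = C]) (simp add: inv_P(3) P(3))
    moreover have "P ` inv P ` M = M"
      using P(2) by (simp add: bij_is_surj image_f_inv_f)
    ultimately show "\<exists>M. fin_codim_subspace sc ip M \<and> g_admissible ip B g M"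
      using M(2) g_admissible_image[OF forms, of g "inv P ` M"] by auto
  next
    assume "\<exists>M. fin_codim_subspace sc ip M \<and> g_admissible ip B g M"
    then obtain M where M: "fin_codim_subspace sc ip M" "g_admissible ip B g M" by blast
    then show "\<exists>M. fin_codim_subspace sc ip M \<and> g_admissible ip A g M"
      using fin_codim_subspace_image[OF M(1) P(1,2,4)] g_admissible_image[OF forms] by blast
  qed
  then show ?thesis by (simp add: gess_eq_Sup_admissible)
qed

lemma gval_inv: "bij A \<Longrightarrow> gval ip (inv A) = gval ip A"
  by (rule gval_transfer[of A]) (simp_all add: bij_is_surj bij_is_inj norm_minus_commute)

lemma gess_inv:
  assumes "bounded_op sc ip A" "bij A" "bounded_op sc ip (inv A)"
  shows "gess sc ip (inv A) = gess sc ip A"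
proof -
  obtain C C' where A: "module_hom sc sc A" "\<And>x. hnorm ip (A x) \<le> C * hnorm ip x"
    "\<And>x. hnorm ip (inv A x) \<le> C' * hnorm ip x"
    using assms(1,3) by (metis bounded_opE)
  show ?thesis
    by (rule gess_transfer[OF A(1) assms(2) A(2,3)])
      (simp_all add: assms(2) bij_is_inj norm_minus_commute)
qed

section \<open>The space K = H \<oplus> H\<close>

lemma norm_K_sq: "(hnorm (ipK ip) z)\<^sup>2 = (hnorm ip (fst z))\<^sup>2 + (hnorm ip (snd z))\<^sup>2"
  by (simp add: hnorm_def ipK_def ip_self_Re_nonneg)

lemma norm_K_nonneg: "hnorm (ipK ip) z \<ge> 0"
  by (simp add: hnorm_def ipK_def ip_self_Re_nonneg)

lemma norm_fst_le_norm_K: "hnorm ip (fst z) \<le> hnorm (ipK ip) z"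
  by (rule power2_le_imp_le) (simp_all add: norm_K_sq norm_K_nonneg)

lemma norm_snd_le_norm_K: "hnorm ip (snd z) \<le> hnorm (ipK ip) z"
  by (rule power2_le_imp_le) (simp_all add: norm_K_sq norm_K_nonneg)

lemma norm_K_le: "hnorm (ipK ip) z \<le> hnorm ip (fst z) + hnorm ip (snd z)"
  by (rule power2_le_imp_le) (simp_all add: norm_K_sq power2_sum)

lemma norm_K_Jop: "hnorm (ipK ip) (Jop z) = hnorm (ipK ip) z"
  by (simp add: hnorm_def ipK_def Jop_def)

lemma converges_K_Pair:
  assumes "converges ip (\<lambda>n. fst (s n)) l1" "converges ip (\<lambda>n. snd (s n)) l2"
  shows "converges (ipK ip) s (l1, l2)"
  unfolding converges_def
proof (intro allI impI)
  fix e :: real assume "e > 0"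
  then obtain N1 N2 where "\<forall>n\<ge>N1. hnorm ip (fst (s n) - l1) < e / 2"
    "\<forall>n\<ge>N2. hnorm ip (snd (s n) - l2) < e / 2"
    using assms unfolding converges_def by (meson half_gt_zero)
  then have "hnorm (ipK ip) (s n - (l1, l2)) < e" if "n \<ge> max N1 N2" for n
    using that norm_K_le[of "s n - (l1, l2)"] by fastforce
  then show "\<exists>N. \<forall>n\<ge>N. hnorm (ipK ip) (s n - (l1, l2)) < e" by blast
qed

lemma hilbert_space_K: "hilbert_space (scK sc) (ipK ip)"
proof unfold_locales
  fix a b :: complex and x y z :: "'h \<times> 'h"
  show "scK sc a (x + y) = scK sc a x + scK sc a y"
    by (simp add: scK_def scale_right_distrib)
  show "scK sc (a + b) x = scK sc a x + scK sc b x"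
    by (simp add: scK_def scale_left_distrib)
  show "scK sc a (scK sc b x) = scK sc (a * b) x"
    by (simp add: scK_def)
  show "scK sc 1 x = x"
    by (simp add: scK_def)
  show "ipK ip x (y + z) = ipK ip x y + ipK ip x z"
    by (simp add: ipK_def ip_add_right)
  show "ipK ip x (scK sc a y) = a * ipK ip x y"
    by (simp add: ipK_def scK_def ip_sc_right distrib_left)
  show "ipK ip x y = cnj (ipK ip y x)"
    by (simp add: ipK_def cnj_ip)
  show "Re (ipK ip x x) \<ge> 0"
    by (simp add: ipK_def ip_self_Re_nonneg)
  show "x = 0" if "ipK ip x x = 0"
  proof -
    have "(hnorm ip (fst x))\<^sup>2 + (hnorm ip (snd x))\<^sup>2 = 0"
      using arg_cong[OF that, of Re] by (simp add: ipK_def norm_sq)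
    then show ?thesis by (simp add: prod_eq_iff)
  qed
next
  fix s :: "nat \<Rightarrow> 'h \<times> 'h" assume s: "Cauchy_seq (ipK ip) s"
  have "Cauchy_seq ip (\<lambda>n. fst (s n))"
    by (rule Cauchy_seq_dominated[OF s]) (metis norm_fst_le_norm_K fst_diff)
  moreover have "Cauchy_seq ip (\<lambda>n. snd (s n))"
    by (rule Cauchy_seq_dominated[OF s]) (metis norm_snd_le_norm_K snd_diff)
  ultimately show "\<exists>l. converges (ipK ip) s l"
    using complete converges_K_Pair by blast
qed

lemma norm_K_eq_sqrt: "hnorm (ipK ip) z = sqrt ((hnorm ip (fst z))\<^sup>2 + (hnorm ip (snd z))\<^sup>2)"
  using norm_K_sq[of z] norm_K_nonneg[of z] by (simp add: real_sqrt_unique)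

lemma norm_K_Pair_zero [simp]: "hnorm (ipK ip) (x, 0) = hnorm ip x" "hnorm (ipK ip) (0, x) = hnorm ip x"
  by (simp_all add: hnorm_def ipK_def)

lemma Jop_module_hom: "module_hom (scK sc) (scK sc) Jop"
  using hilbert_space_K by (simp add: module_hom_iff hilbert_space_def Jop_def scK_def)

end

lemma Jop_Pair [simp]: "Jop (x, y) = (x, - y)"
  by (simp add: Jop_def)

lemma Jop_Jop [simp]: "Jop (Jop z) = z"
  by (simp add: Jop_def)

lemma bij_Jop: "bij Jop" and inv_Jop: "inv Jop = Jop"
  by (metis Jop_Jop bijI' inv_equality)+

section \<open>J-unitary operators\<close>

locale J_unitary_operator = hilbert_space sc ip
  for sc :: "complex \<Rightarrow> 'h::ab_group_add \<Rightarrow> 'h" and ip +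
  fixes T :: "'h \<times> 'h \<Rightarrow> 'h \<times> 'h"
  assumes J_unitary: "J_unitary sc ip T"
begin

sublocale K: hilbert_space "scK sc" "ipK ip"
  by (rule hilbert_space_K)

lemma T_bounded: "bounded_op (scK sc) (ipK ip) T"
  and T_bij: "bij T"
  and inv_T_bounded: "bounded_op (scK sc) (ipK ip) (inv T)"
  and adj_T_Jop: "adj (ipK ip) T (Jop (T z)) = Jop z"
  using J_unitary unfolding J_unitary_def by blast+

lemma T_module_hom: "module_hom (scK sc) (scK sc) T"
  using T_bounded by (rule K.bounded_opE)

lemma inv_T_T [simp]: "inv T (T z) = z" and T_inv_T [simp]: "T (inv T w) = w"
  using T_bij by (simp_all add: bij_is_inj bij_is_surj surj_f_inv_f)

text \<open>This is where the J-unitarity T* J T = J enters: T* = J T\<inverse> J.\<close>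
lemma adj_T: "adj (ipK ip) T w = Jop (inv T (Jop w))"
  using adj_T_Jop[of "inv T (Jop w)"] by simp

lemma T_adjoint: "ipK ip (T z) w = ipK ip z (Jop (inv T (Jop w)))"
  using K.adj_adjoint[OF T_bounded] by (simp add: adj_T)

lemma J_norm_T:
  "(hnorm ip (fst (T z)))\<^sup>2 - (hnorm ip (snd (T z)))\<^sup>2 = (hnorm ip (fst z))\<^sup>2 - (hnorm ip (snd z))\<^sup>2"
proof -
  have "ipK ip (T z) (Jop (T z)) = ipK ip z (Jop z)"
    using T_adjoint[of z "Jop (T z)"] by simp
  then have "Re (ipK ip (T z) (Jop (T z))) = Re (ipK ip z (Jop z))" by simp
  then show ?thesis by (simp add: ipK_def Jop_def norm_sq)
qed

lemma T_Pair: "T (x, y) = (blk_a T x + blk_b T y, blk_c T x + blk_d T y)"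
proof -
  have "T (x, y) = T (x, 0) + T (0, y)"
    using module_hom.add[OF T_module_hom, of "(x, 0)" "(0, y)"] by simp
  then show ?thesis by (simp add: blk_a_def blk_b_def blk_c_def blk_d_def prod_eq_iff)
qed

lemma blk_module_hom:
  "module_hom sc sc (blk_a T)" "module_hom sc sc (blk_b T)"
  "module_hom sc sc (blk_c T)" "module_hom sc sc (blk_d T)"
proof -
  have add: "T (x + x', 0) = T (x, 0) + T (x', 0)" "T (0, y + y') = T (0, y) + T (0, y')"
    for x x' y y' :: 'h
    using module_hom.add[OF T_module_hom, of "(x, 0)" "(x', 0)"]
      module_hom.add[OF T_module_hom, of "(0, y)" "(0, y')"] by simp_all
  have scale: "T (sc t x, 0) = scK sc t (T (x, 0))" "T (0, sc t y) = scK sc t (T (0, y))"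
    for t x y
    using module_hom.scale[OF T_module_hom, of t "(x, 0)"]
      module_hom.scale[OF T_module_hom, of t "(0, y)"] by (simp_all add: scK_def)
  show "module_hom sc sc (blk_a T)" "module_hom sc sc (blk_b T)"
    "module_hom sc sc (blk_c T)" "module_hom sc sc (blk_d T)"
    by (simp_all add: module_hom_iff module_axioms blk_a_def blk_b_def blk_c_def blk_d_def
        add scale scK_def)
qed

lemma blk_zero [simp]: "blk_a T 0 = 0" "blk_b T 0 = 0" "blk_c T 0 = 0" "blk_d T 0 = 0"
  using module_hom.zero[OF blk_module_hom(1)] module_hom.zero[OF blk_module_hom(2)]
    module_hom.zero[OF blk_module_hom(3)] module_hom.zero[OF blk_module_hom(4)] by blast+

lemma norm_blk_c_le: obtains C where "\<And>x. hnorm ip (blk_c T x) \<le> C * hnorm ip x"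
proof -
  obtain C where "\<And>z. hnorm (ipK ip) (T z) \<le> C * hnorm (ipK ip) z"
    using T_bounded by (rule K.bounded_opE) blast
  then have "hnorm ip (blk_c T x) \<le> C * hnorm ip x" for x
    using norm_snd_le_norm_K[of "T (x, 0)"] by (metis blk_c_def norm_K_Pair_zero(1) order_trans)
  then show ?thesis using that by blast
qed

lemma norm_blk_d_le: obtains C where "\<And>y. hnorm ip (blk_d T y) \<le> C * hnorm ip y"
proof -
  obtain C where "\<And>z. hnorm (ipK ip) (T z) \<le> C * hnorm (ipK ip) z"
    using T_bounded by (rule K.bounded_opE) blast
  then have "hnorm ip (blk_d T y) \<le> C * hnorm ip y" for y
    using norm_snd_le_norm_K[of "T (0, y)"] by (metis blk_d_def norm_K_Pair_zero(2) order_trans)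
  then show ?thesis using that by blast
qed

lemma norm_le_norm_blk_d: "hnorm ip y \<le> hnorm ip (blk_d T y)"
proof -
  have "(hnorm ip (blk_b T y))\<^sup>2 - (hnorm ip (blk_d T y))\<^sup>2 = - (hnorm ip y)\<^sup>2"
    using J_norm_T[of "(0, y)"] by (simp add: T_Pair)
  then have "(hnorm ip y)\<^sup>2 \<le> (hnorm ip (blk_d T y))\<^sup>2"
    using zero_le_power2[of "hnorm ip (blk_b T y)"] by linarith
  then show ?thesis by (rule power2_le_imp_le) simp
qed

lemma bij_blk_d: "bij (blk_d T)"
proof (rule bijI)
  show "inj (blk_d T)"
    using norm_le_norm_blk_d unfolding module_hom.inj_iff_eq_0[OF blk_module_hom(4)]
    by (metis norm_eq_0_iff norm_nonneg order_antisym)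
  obtain C where C: "\<And>y. hnorm ip (blk_d T y) \<le> C * hnorm ip y" by (rule norm_blk_d_le) blast
  have "range (blk_d T) = UNIV"
  proof (rule closed_subspace_eq_UNIV)
    show "closed_subspace (range (blk_d T))"
      using closed_subspace_range[OF blk_module_hom(4) C norm_le_norm_blk_d] .
    fix q assume q: "\<And>u. u \<in> range (blk_d T) \<Longrightarrow> ip u q = 0"
    define z where "z = inv T (0, q)"
    have "ip y (snd z) = 0" for y
    proof -
      have "ipK ip (T (0, y)) (Jop (0, q)) = ipK ip (0, y) (Jop z)"
        using T_adjoint[of "(0, y)" "Jop (0, q)"] by (simp add: z_def)
      then show ?thesis using q[of "blk_d T y"] by (simp add: ipK_def T_Pair Jop_def)
    qed
    then have "snd z = 0" by (metis ip_right_cancel ip_zero_right)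
    then have "- (hnorm ip q)\<^sup>2 = (hnorm ip (fst z))\<^sup>2"
      using J_norm_T[of z] by (simp add: z_def)
    then show "q = 0"
      by (metis add.inverse_neutral neg_0_le_iff_le norm_eq_0_iff order_antisym power_zero_numeral
          zero_le_power2 power2_eq_iff_nonneg norm_nonneg)
  qed
  then show "surj (blk_d T)" .
qed

lemma blk_d_inv [simp]: "blk_d T (inv (blk_d T) y) = y"
  and inv_blk_d [simp]: "inv (blk_d T) (blk_d T x) = x"
  using bij_blk_d by (simp_all add: bij_is_surj bij_is_inj surj_f_inv_f)

lemma inv_blk_d_module_hom: "module_hom sc sc (inv (blk_d T))"
  using module_hom_inv[OF blk_module_hom(4) bij_blk_d] .

lemma norm_inv_blk_d_le: "hnorm ip (inv (blk_d T) y) \<le> hnorm ip y"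
  using norm_le_norm_blk_d[of "inv (blk_d T) y"] by simp

lemma adj_blk_a: "adj ip (blk_a T) u = fst (inv T (u, 0))"
proof -
  have "ip (blk_a T x) u = ip x (fst (inv T (u, 0)))" for x u
    using T_adjoint[of "(x, 0)" "(u, 0)"] by (simp add: ipK_def T_Pair Jop_def)
  then show ?thesis by (subst adj_eqI) auto
qed

lemma inv_adj_blk_a:
  "inv (adj ip (blk_a T)) x = blk_a T x - blk_b T (inv (blk_d T) (blk_c T x))"
proof (rule inv_f_eq)
  define w where "w = inv (blk_d T) (blk_c T x)"
  have "T (x, - w) = (blk_a T x - blk_b T w, 0)"
    by (simp add: T_Pair w_def module_hom.neg[OF blk_module_hom(2)]
        module_hom.neg[OF blk_module_hom(4)])
  then show "adj ip (blk_a T) (blk_a T x - blk_b T w) = x"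
    by (metis adj_blk_a inv_T_T fst_conv)
  show "inj (adj ip (blk_a T))"
  proof (rule injI)
    fix u v assume "adj ip (blk_a T) u = adj ip (blk_a T) v"
    then have "fst (inv T (u - v, 0)) = 0"
      using module_hom.diff[OF K.module_hom_inv[OF T_module_hom T_bij], of "(u, 0)" "(v, 0)"]
      by (simp add: adj_blk_a)
    then obtain y where "inv T (u - v, 0) = (0, y)" by (metis prod.collapse)
    then have "T (0, y) = (u - v, 0)" by (metis T_inv_T)
    then have "blk_b T y = u - v" "blk_d T y = 0" by (simp_all add: T_Pair)
    moreover from this(2) have "y = 0"
      by (metis inv_blk_d module_hom.zero[OF inv_blk_d_module_hom])
    ultimately show "u = v" by simp
  qed
qed

lemma Vop_Potapov_Ginzburg: "Vop ip T (fst z, snd (T z)) = (fst (T z), snd z)"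
proof (cases z)
  case (Pair x y)
  have "inv (blk_d T) (blk_c T x + blk_d T y) = inv (blk_d T) (blk_c T x) + y"
    by (simp add: module_hom.add[OF inv_blk_d_module_hom])
  then show ?thesis
    by (simp add: Pair Vop_def T_Pair inv_adj_blk_a module_hom.add[OF blk_module_hom(2)])
qed

definition pg_map :: "'h \<times> 'h \<Rightarrow> 'h \<times> 'h" where
  "pg_map z = (fst z, snd (T z))"

lemma bij_pg_map: "bij pg_map"
  and inv_pg_map: "inv pg_map w = (fst w, inv (blk_d T) (snd w - blk_c T (fst w)))"
proof -
  define g where "g w = (fst w, inv (blk_d T) (snd w - blk_c T (fst w)))" for w
  have "g (pg_map z) = z" "pg_map (g w) = w" for z w
    by (cases z, simp add: g_def pg_map_def T_Pair)
      (cases w, simp add: g_def pg_map_def T_Pair)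
  then show "bij pg_map" "inv pg_map w = g w"
    by (metis bijI' inv_equality)+
qed

lemma pg_map_module_hom: "module_hom (scK sc) (scK sc) pg_map"
  using T_module_hom by (simp add: module_hom_iff K.module_axioms pg_map_def scK_def)

lemma pg_map_bounded: obtains C where "\<And>z. hnorm (ipK ip) (pg_map z) \<le> C * hnorm (ipK ip) z"
proof -
  obtain C where C: "\<And>z. hnorm (ipK ip) (T z) \<le> C * hnorm (ipK ip) z"
    using T_bounded by (rule K.bounded_opE) blast
  have "hnorm (ipK ip) (pg_map z) \<le> (1 + C) * hnorm (ipK ip) z" for z
    using norm_K_le[of "pg_map z"] norm_fst_le_norm_K[of z] norm_snd_le_norm_K[of "T z"] C[of z]
    by (simp add: pg_map_def distrib_right)
  then show ?thesis using that by blast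
qed

lemma inv_pg_map_bounded: obtains C where "\<And>w. hnorm (ipK ip) (inv pg_map w) \<le> C * hnorm (ipK ip) w"
proof -
  obtain C where C: "\<And>x. hnorm ip (blk_c T x) \<le> C * hnorm ip x"
    by (rule norm_blk_c_le) blast
  have "hnorm (ipK ip) (inv pg_map w) \<le> (2 + \<bar>C\<bar>) * hnorm (ipK ip) w" for w
  proof -
    have "hnorm (ipK ip) (inv pg_map w) \<le> hnorm ip (fst w) + hnorm ip (snd w - blk_c T (fst w))"
      using norm_K_le[of "inv pg_map w"] norm_inv_blk_d_le
      by (simp add: inv_pg_map) (meson add_left_mono order_trans)
    also have "\<dots> \<le> hnorm ip (fst w) + (hnorm ip (snd w) + \<bar>C\<bar> * hnorm ip (fst w))"
      using norm_triangle[of "snd w" "- blk_c T (fst w)"] C[of "fst w"]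
        mult_right_mono[OF abs_ge_self[of C] norm_nonneg[of "fst w"]] by (simp add: norm_minus)
    also have "\<dots> \<le> (2 + \<bar>C\<bar>) * hnorm (ipK ip) w"
      using norm_fst_le_norm_K[of w] norm_snd_le_norm_K[of w]
        mult_left_mono[of "hnorm ip (fst w)" "hnorm (ipK ip) w" "\<bar>C\<bar>"]
      by (simp add: distrib_right)
    finally show ?thesis .
  qed
  then show ?thesis using that by blast
qed

lemma pg_map_forms:
  "(hnorm (ipK ip) (pg_map z))\<^sup>2 + (hnorm (ipK ip) (Vop ip T (pg_map z)))\<^sup>2
     = (hnorm (ipK ip) z)\<^sup>2 + (hnorm (ipK ip) (T z))\<^sup>2"
  "hnorm (ipK ip) (Vop ip T (pg_map z) - pg_map z) = hnorm (ipK ip) (T z - z)"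
  by (simp_all add: pg_map_def Vop_Potapov_Ginzburg norm_K_sq norm_K_eq_sqrt norm_minus_commute)

lemma gval_Vop: "gval (ipK ip) (Vop ip T) = gval (ipK ip) T"
  using bij_pg_map by (intro gval_transfer[OF _ pg_map_forms]) (rule bij_is_surj)

lemma gess_Vop: "gess (scK sc) (ipK ip) (Vop ip T) = gess (scK sc) (ipK ip) T"
proof -
  obtain C C' where "\<And>z. hnorm (ipK ip) (pg_map z) \<le> C * hnorm (ipK ip) z"
    "\<And>w. hnorm (ipK ip) (inv pg_map w) \<le> C' * hnorm (ipK ip) w"
    using pg_map_bounded inv_pg_map_bounded by metis
  then show ?thesis
    by (rule K.gess_transfer[OF pg_map_module_hom bij_pg_map _ _ pg_map_forms])
qed

lemma adj_T_forms:
  "(hnorm (ipK ip) (Jop z))\<^sup>2 + (hnorm (ipK ip) (adj (ipK ip) T (Jop z)))\<^sup>2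
     = (hnorm (ipK ip) z)\<^sup>2 + (hnorm (ipK ip) (inv T z))\<^sup>2"
  "hnorm (ipK ip) (adj (ipK ip) T (Jop z) - Jop z) = hnorm (ipK ip) (inv T z - z)"
  by (simp_all add: adj_T norm_K_Jop module_hom.diff[OF Jop_module_hom, symmetric])

lemma gval_adj_T: "gval (ipK ip) (adj (ipK ip) T) = gval (ipK ip) T"
  using gval_transfer[OF bij_is_surj[OF bij_Jop] adj_T_forms] K.gval_inv[OF T_bij] by simp

lemma gess_adj_T: "gess (scK sc) (ipK ip) (adj (ipK ip) T) = gess (scK sc) (ipK ip) T"
proof -
  have "gess (scK sc) (ipK ip) (adj (ipK ip) T) = gess (scK sc) (ipK ip) (inv T)"
    by (rule K.gess_transfer[OF Jop_module_hom bij_Jop _ _ adj_T_forms, where C = 1 and C' = 1])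
      (simp_all add: norm_K_Jop inv_Jop)
  then show ?thesis using K.gess_inv[OF T_bounded T_bij inv_T_bounded] by simp
qed

end

theorem proposition4p5:
  fixes sc :: "complex \<Rightarrow> 'h::ab_group_add \<Rightarrow> 'h"
    and ip :: "'h \<Rightarrow> 'h \<Rightarrow> complex"
    and T :: "'h \<times> 'h \<Rightarrow> 'h \<times> 'h"
  assumes "separable_complex_hilbert sc ip"
    and "J_unitary sc ip T"
  shows "gval (ipK ip) (Vop ip T) = gval (ipK ip) T \<and>
     gess (scK sc) (ipK ip) (Vop ip T) = gess (scK sc) (ipK ip) T \<and>
     gval (ipK ip) T = gval (ipK ip) (adj (ipK ip) T) \<and>
     gval (ipK ip) T = gval (ipK ip) (inv T) \<and>
     gess (scK sc) (ipK ip) T = gess (scK sc) (ipK ip) (adj (ipK ip) T) \<and>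
     gess (scK sc) (ipK ip) T = gess (scK sc) (ipK ip) (inv T)"
proof -
  interpret J_unitary_operator sc ip T
    using assms by (simp add: J_unitary_operator_def J_unitary_operator_axioms_def
        hilbert_space_if_separable_complex_hilbert)
  show ?thesis
    using gval_Vop gess_Vop gval_adj_T gess_adj_T K.gval_inv[OF T_bij]
      K.gess_inv[OF T_bounded T_bij inv_T_bounded] by simp
qed

end
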